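(* Let $\mathbf a=(a_0,\dots,a_n)$ be integers $a_i>1$. For sufficiently small $\epsilon>0$ there is a $C(L)$-equivariant Liouville homotopy between $(X^1_\epsilon,-d^{\mathbb C}\phi_0)$ and $(X^1_\epsilon,\lambda_{\mathbf a})$.
   Context: $f(\mathbf z)=\sum_k z_k^{a_k}$ on $\mathbb{C}^{n+1}$, $V_{\mathbf a}(\epsilon)=f^{-1}(\epsilon)$, $X^1_\epsilon=V_{\mathbf a}(\epsilon)\cap B(1)$ with $B(1)$ the closed unit ball. For $t\in[0,1]$ let $\phi_t(\mathbf z)=\frac18\sum_j c_j(t)|z_j|^2$ with $c_j(t)=1+t(a_j-1)$, and $d^{\mathbb C}\phi=d\phi\circ i$; thus $-d^{\mathbb C}\phi_1=\lambda_{\mathbf a}=\frac{i}{8}\sum_k a_k(z_kd\bar z_k-\bar z_kdz_k)$ (forms restricted to $X^1_\epsilon$). With $L=\mathrm{lcm}(a_j)$, $b_j=L/a_j$, $\zeta=e^{2\pi i/L}$, the group $C(L)=\langle\zeta\rangle$ acts by $z_j\mapsto\zeta^{b_j}z_j$. A $C(L)$-equivariant Liouville homotopy is a smooth family of $C(L)$-invariant 1-forms $\lambda_s$ on $X^1_\epsilon$, each making $X^1_\epsilon$ a Liouville domain, joining the two given forms. *)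

theory Defs
  imports "HOL-Analysis.Analysis"
begin

text \<open>Points of C^(n+1) are vectors of type complex^'n, with 'n a finite index type
  of cardinality n+1. Exponents: a :: 'n => nat.\<close>

fun Ck :: "nat \<Rightarrow> ('a::euclidean_space \<Rightarrow> 'b::real_normed_vector) \<Rightarrow> 'a set \<Rightarrow> bool" where
  "Ck 0 f S = continuous_on S f"
| "Ck (Suc k) f S = ((\<forall>x\<in>S. f differentiable (at x)) \<and>
      (\<forall>i\<in>Basis. Ck k (\<lambda>x. frechet_derivative f (at x) i) S))"

definition Cinf_on :: "'a::euclidean_space set \<Rightarrow> ('a \<Rightarrow> 'b::real_normed_vector) \<Rightarrow> bool" where
  "Cinf_on S f \<longleftrightarrow> open S \<and> (\<forall>k. Ck k f S)"

definition brieskorn :: "('n::finite \<Rightarrow> nat) \<Rightarrow> complex^'n \<Rightarrow> complex" where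
  "brieskorn a z = (\<Sum>k\<in>UNIV. (z$k) ^ a k)"

definition df :: "('n::finite \<Rightarrow> nat) \<Rightarrow> complex^'n \<Rightarrow> complex^'n \<Rightarrow> complex" where
  "df a z v = (\<Sum>k\<in>UNIV. of_nat (a k) * (z$k) ^ (a k - 1) * v$k)"

definition tangent :: "('n::finite \<Rightarrow> nat) \<Rightarrow> complex^'n \<Rightarrow> (complex^'n) set" where
  "tangent a z = {v. df a z v = 0}"

definition Xeps :: "('n::finite \<Rightarrow> nat) \<Rightarrow> real \<Rightarrow> (complex^'n) set" where
  "Xeps a eps = {z. brieskorn a z = complex_of_real eps \<and> norm z \<le> 1}"

text \<open>A 1-form lambda is represented by a vector field w via lambda_z(v) = w z \<bullet> v.
  Its exterior derivative (ambient, hence also after restriction to X):\<close>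
definition dform :: "('a::euclidean_space \<Rightarrow> 'a) \<Rightarrow> 'a \<Rightarrow> 'a \<Rightarrow> 'a \<Rightarrow> real" where
  "dform w z u v = frechet_derivative w (at z) u \<bullet> v - frechet_derivative w (at z) v \<bullet> u"

text \<open>(X^1_eps, lambda) is a Liouville domain: X is a manifold with boundary
  (eps regular value of f on X), d lambda restricted to TX is nondegenerate,
  and the Liouville vector field Y (iota_Y d lambda = lambda on TX) points
  strictly outward along the boundary (the unit sphere).\<close>
definition liouville_domain :: "('n::finite \<Rightarrow> nat) \<Rightarrow> real \<Rightarrow> (complex^'n \<Rightarrow> complex^'n) \<Rightarrow> bool" where
  "liouville_domain a eps w \<longleftrightarrow>
     (\<forall>z\<in>Xeps a eps. (\<exists>v. df a z v \<noteq> 0)) \<and>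
     (\<forall>z\<in>Xeps a eps. \<forall>u\<in>tangent a z.
         (\<forall>v\<in>tangent a z. dform w z u v = 0) \<longrightarrow> u = 0) \<and>
     (\<forall>z\<in>Xeps a eps. norm z = 1 \<longrightarrow>
        (\<forall>Y\<in>tangent a z. (\<forall>v\<in>tangent a z. dform w z Y v = w z \<bullet> v) \<longrightarrow> z \<bullet> Y > 0))"

definition phi :: "('n::finite \<Rightarrow> nat) \<Rightarrow> real \<Rightarrow> complex^'n \<Rightarrow> real" where
  "phi a t z = (1/8) * (\<Sum>j\<in>UNIV. (1 + t * (real (a j) - 1)) * (cmod (z$j))\<^sup>2)"

definition dC :: "(complex^'n::finite \<Rightarrow> real) \<Rightarrow> complex^'n \<Rightarrow> complex^'n \<Rightarrow> real" where
  "dC g z v = frechet_derivative g (at z) (\<chi> j. \<i> * v$j)"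

definition lambda_a :: "('n::finite \<Rightarrow> nat) \<Rightarrow> complex^'n \<Rightarrow> complex^'n \<Rightarrow> real" where
  "lambda_a a z v = Re ((\<i>/8) * (\<Sum>k\<in>UNIV. of_nat (a k) * (z$k * cnj (v$k) - cnj (z$k) * v$k)))"

definition lcmL :: "('n::finite \<Rightarrow> nat) \<Rightarrow> nat" where
  "lcmL a = Lcm (range a)"

definition act :: "('n::finite \<Rightarrow> nat) \<Rightarrow> nat \<Rightarrow> complex^'n \<Rightarrow> complex^'n" where
  "act a m z = (\<chi> j. (cis (2 * pi / real (lcmL a))) ^ (m * (lcmL a div a j)) * z$j)"

definition equivariant_liouville_homotopy ::
  "('n::finite \<Rightarrow> nat) \<Rightarrow> real \<Rightarrow> (complex^'n \<Rightarrow> complex^'n \<Rightarrow> real)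
     \<Rightarrow> (complex^'n \<Rightarrow> complex^'n \<Rightarrow> real) \<Rightarrow> bool" where
  "equivariant_liouville_homotopy a eps lam0 lam1 \<longleftrightarrow>
    (\<exists>w :: real \<Rightarrow> complex^'n \<Rightarrow> complex^'n. \<exists>W.
       {0..1} \<times> Xeps a eps \<subseteq> W \<and> Cinf_on W (\<lambda>p. w (fst p) (snd p)) \<and>
       (\<forall>s\<in>{0..1}. liouville_domain a eps (w s)) \<and>
       (\<forall>s\<in>{0..1}. \<forall>m. \<forall>z\<in>Xeps a eps. \<forall>v\<in>tangent a z.
           w s (act a m z) \<bullet> act a m v = w s z \<bullet> v) \<and>
       (\<forall>z\<in>Xeps a eps. \<forall>v\<in>tangent a z. w 0 z \<bullet> v = lam0 z v) \<and>
       (\<forall>z\<in>Xeps a eps. \<forall>v\<in>tangent a z. w 1 z \<bullet> v = lam1 z v))"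

end

theory Submission
  imports Defs "HOL-Computational_Algebra.Polynomial"
begin

text \<open>All forms of the homotopy are diagonal, z \<mapsto> (v \<mapsto> \<Sum>_j (c_j/4) Re (\<i> z_j conj v_j)),
  with c = 1 at the start (-d^C phi_0) and c = a at the end (lambda_a). They are invariant under
  the diagonal unitary C(L)-action, and their differentials are positive Hermitian forms, hence
  nondegenerate on the complex tangent spaces of X. Pairing the Liouville field Y with a suitable
  tangent vector expresses z \<bullet> Y on the unit sphere, up to a positive factor, by a quantity
  that is affine in the weights 1/c_j. For 1/c = 1 and for 1/c = 1/a this quantity is positive
  once eps is small: then |\<Sum> z_k \<partial>_kf| stays below |\<nabla>f|, while \<Sum> |\<partial>_kf|^2/a_k is bounded
  below on the sphere. So Y points outward whenever 1/c lies on the segment between 1 and 1/a,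
  and weights with this property can be chosen polynomial, hence smooth, in the parameter.\<close>

section \<open>Smoothness of fields polynomial in time and affine in space\<close>

lemma has_derivative_vecI:
  fixes f :: "'a::real_normed_vector \<Rightarrow> 'b::euclidean_space^'n"
  assumes "\<And>j. ((\<lambda>x. f x $ j) has_derivative (\<lambda>h. f' h $ j)) (at x within S)"
  shows "(f has_derivative f') (at x within S)"
proof (rule iffD2[OF has_derivative_componentwise_within], rule ballI)
  fix i :: "'b^'n" assume "i \<in> Basis"
  then obtain j u where i: "i = axis j u" unfolding Basis_vec_def by blast
  have "((\<lambda>x. f x $ j \<bullet> u) has_derivative (\<lambda>h. f' h $ j \<bullet> u)) (at x within S)"
    by (rule has_derivative_inner_left[OF assms])
  then show "((\<lambda>x. f x \<bullet> i) has_derivative (\<lambda>h. f' h \<bullet> i)) (at x within S)"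
    unfolding i inner_axis .
qed

lemma has_derivative_vec_nth:
  "((\<lambda>x::'a::real_normed_vector^'n. x $ j) has_derivative (\<lambda>h. h $ j)) F"
  by (rule bounded_linear_imp_has_derivative[OF bounded_linear_vec_nth])

lemma has_derivative_vec_nth_snd:
  "((\<lambda>p::'a::real_normed_vector \<times> ('b::real_normed_vector^'n). snd p $ j) has_derivative (\<lambda>h. snd h $ j)) (at x)"
  using bounded_linear.has_derivative[OF bounded_linear_vec_nth has_derivative_snd[OF has_derivative_ident]] .

lemma has_derivative_poly_fst:
  "((\<lambda>p::real \<times> 'b::real_normed_vector. complex_of_real (poly P (fst p))) has_derivative
     (\<lambda>h. complex_of_real (poly (pderiv P) (fst x) * fst h))) (at x)"
proof -
  have "((\<lambda>t. poly P t) has_derivative (\<lambda>h. poly (pderiv P) (fst x) * h)) (at (fst x))"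
    using poly_DERIV has_field_derivative_imp_has_derivative by blast
  from has_derivative_compose[OF has_derivative_fst[OF has_derivative_ident] this]
  show ?thesis by (rule has_derivative_of_real)
qed

text \<open>Unlike the diagonal linear fields alone, this class is closed under partial
  derivatives, which is what the induction over C^k needs.\<close>
definition poly_affine_field ::
  "('n::finite \<Rightarrow> complex) \<Rightarrow> ('n \<Rightarrow> complex) \<Rightarrow> ('n \<Rightarrow> real poly) \<Rightarrow> ('n \<Rightarrow> real poly)
     \<Rightarrow> real \<times> (complex^'n) \<Rightarrow> complex^'n" where
  "poly_affine_field K K' P Q p =
     (\<chi> j. K j * of_real (poly (P j) (fst p)) * snd p $ j + K' j * of_real (poly (Q j) (fst p)))"

definition poly_affine_field_deriv ::
  "('n::finite \<Rightarrow> complex) \<Rightarrow> ('n \<Rightarrow> complex) \<Rightarrow> ('n \<Rightarrow> real poly) \<Rightarrow> ('n \<Rightarrow> real poly)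
     \<Rightarrow> real \<times> (complex^'n) \<Rightarrow> real \<times> (complex^'n) \<Rightarrow> complex^'n" where
  "poly_affine_field_deriv K K' P Q x h =
     (\<chi> j. K j * (of_real (poly (pderiv (P j)) (fst x) * fst h) * snd x $ j
                 + of_real (poly (P j) (fst x)) * snd h $ j)
          + K' j * of_real (poly (pderiv (Q j)) (fst x) * fst h))"

lemma has_derivative_poly_affine_field:
  "(poly_affine_field K K' P Q has_derivative poly_affine_field_deriv K K' P Q x) (at x)"
  unfolding poly_affine_field_def
proof (rule has_derivative_vecI)
  fix j
  have "((\<lambda>p. K j * (complex_of_real (poly (P j) (fst p)) * snd p $ j)
                + K' j * complex_of_real (poly (Q j) (fst p))) has_derivative
        (\<lambda>h. K j * (complex_of_real (poly (P j) (fst x)) * snd h $ j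
                + complex_of_real (poly (pderiv (P j)) (fst x) * fst h) * snd x $ j)
             + K' j * complex_of_real (poly (pderiv (Q j)) (fst x) * fst h))) (at x)"
    by (intro has_derivative_add has_derivative_mult_right has_derivative_mult
        has_derivative_poly_fst has_derivative_vec_nth_snd)
  then show "((\<lambda>p. (\<chi> j. K j * of_real (poly (P j) (fst p)) * snd p $ j
                          + K' j * of_real (poly (Q j) (fst p))) $ j)
              has_derivative (\<lambda>h. poly_affine_field_deriv K K' P Q x h $ j)) (at x)"
    by (simp add: poly_affine_field_deriv_def algebra_simps)
qed

lemma frechet_derivative_poly_affine_field:
  "frechet_derivative (poly_affine_field K K' P Q) (at x) = poly_affine_field_deriv K K' P Q x"
  by (rule frechet_derivative_at[OF has_derivative_poly_affine_field, symmetric])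

lemma Ck_poly_affine_field: "Ck k (poly_affine_field K K' P Q) S"
proof (induction k arbitrary: K K' P Q)
  case 0
  show ?case
    by (simp add: continuous_at_imp_continuous_on
        has_derivative_continuous[OF has_derivative_poly_affine_field])
next
  case (Suc k)
  have "Ck k (\<lambda>x. frechet_derivative (poly_affine_field K K' P Q) (at x) i) S"
    if "i \<in> Basis" for i :: "real \<times> (complex^'a)"
  proof -
    from that consider "i = (1, 0)" | e where "i = (0, e)"
      unfolding Basis_prod_def by auto
    then show ?thesis
    proof cases
      case 1
      have "(\<lambda>x. frechet_derivative (poly_affine_field K K' P Q) (at x) i)
            = poly_affine_field K K' (\<lambda>j. pderiv (P j)) (\<lambda>j. pderiv (Q j))"
        by (auto simp: 1 frechet_derivative_poly_affine_field poly_affine_field_deriv_def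
            poly_affine_field_def vec_eq_iff)
      then show ?thesis using Suc.IH by simp
    next
      case 2
      have "(\<lambda>x. frechet_derivative (poly_affine_field K K' P Q) (at x) i)
            = poly_affine_field (\<lambda>j. 0) (\<lambda>j. K j * e $ j) P P"
        by (auto simp: 2 frechet_derivative_poly_affine_field poly_affine_field_deriv_def
            poly_affine_field_def vec_eq_iff)
      then show ?thesis using Suc.IH by simp
    qed
  qed
  moreover have "\<forall>x\<in>S. poly_affine_field K K' P Q differentiable (at x)"
    using has_derivative_poly_affine_field unfolding differentiable_def by blast
  ultimately show ?case by simp
qed

lemma Cinf_on_poly_affine_field: "Cinf_on UNIV (poly_affine_field K K' P Q)"
  by (simp add: Cinf_on_def Ck_poly_affine_field)

section \<open>Diagonal forms and the Brieskorn fibre\<close>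

lemma inner_complex_eq_Re_mult_cnj: "(x::complex) \<bullet> y = Re (x * cnj y)"
  by (simp add: inner_complex_def)

lemma inner_vec_complex: "(x::complex^'n::finite) \<bullet> y = (\<Sum>j\<in>UNIV. Re (x$j * cnj (y$j)))"
  by (simp add: inner_vec_def inner_complex_eq_Re_mult_cnj)

lemma norm_vec_complex_power2: "(norm (z::complex^'n::finite))\<^sup>2 = (\<Sum>k\<in>UNIV. (cmod (z$k))\<^sup>2)"
  by (simp add: norm_vec_def L2_set_def sum_nonneg)

text \<open>The 1-form v \<mapsto> diag_field c z \<bullet> v is -d^C of (1/8) \<Sum>_j c_j |z_j|^2.\<close>
definition diag_field :: "('n::finite \<Rightarrow> real) \<Rightarrow> complex^'n \<Rightarrow> complex^'n" where
  "diag_field c z = (\<chi> j. (\<i>/4 * of_real (c j)) * z$j)"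

lemma has_derivative_diag_mult:
  fixes K :: "'n::finite \<Rightarrow> complex"
  shows "((\<lambda>z::complex^'n. \<chi> j. K j * z$j) has_derivative (\<lambda>z. \<chi> j. K j * z$j)) (at x)"
proof (rule has_derivative_vecI)
  fix j
  show "((\<lambda>z::complex^'n. (\<chi> j. K j * z$j) $ j) has_derivative (\<lambda>h. (\<chi> j. K j * h$j) $ j)) (at x)"
    by (simp add: has_derivative_mult_right has_derivative_vec_nth)
qed

lemma dform_diag_field:
  "dform (diag_field c) z u v = (\<Sum>j\<in>UNIV. c j / 2 * Re (\<i> * u$j * cnj (v$j)))"
proof -
  have "frechet_derivative (diag_field c) (at z) = diag_field c"
    unfolding diag_field_def by (rule frechet_derivative_at[OF has_derivative_diag_mult, symmetric])
  then have "dform (diag_field c) z u v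
     = (\<Sum>j\<in>UNIV. Re ((\<i>/4 * of_real (c j)) * u$j * cnj (v$j)) - Re ((\<i>/4 * of_real (c j)) * v$j * cnj (u$j)))"
    by (simp add: dform_def diag_field_def inner_vec_complex sum_subtractf)
  also have "\<dots> = (\<Sum>j\<in>UNIV. c j / 2 * Re (\<i> * u$j * cnj (v$j)))"
    by (rule sum.cong) (simp_all add: field_simps)
  finally show ?thesis .
qed

lemma inner_diag_field:
  "diag_field c z \<bullet> v = (\<Sum>j\<in>UNIV. c j / 4 * Re (\<i> * z$j * cnj (v$j)))"
  unfolding diag_field_def inner_vec_complex by (rule sum.cong) (simp_all add: field_simps)

definition brieskorn_grad :: "('n::finite \<Rightarrow> nat) \<Rightarrow> complex^'n \<Rightarrow> 'n \<Rightarrow> complex" where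
  "brieskorn_grad a z k = of_nat (a k) * z$k ^ (a k - 1)"

lemma df_eq_sum_brieskorn_grad: "df a z v = (\<Sum>k\<in>UNIV. brieskorn_grad a z k * v$k)"
  by (simp add: df_def brieskorn_grad_def)

lemma brieskorn_grad_mult: "a k > 0 \<Longrightarrow> brieskorn_grad a z k * z$k = of_nat (a k) * z$k ^ a k"
  by (simp add: brieskorn_grad_def mult.assoc power_minus_mult[of "a k", simplified])

lemma tangent_mult_ii: "v \<in> tangent a z \<Longrightarrow> (\<chi> j. \<i> * v$j) \<in> tangent a z"
  by (simp add: tangent_def df_def sum_distrib_left algebra_simps flip: sum_distrib_left)

lemma df_nonzero_if_brieskorn_nonzero:
  assumes "\<forall>k. a k > 0" and "brieskorn a z \<noteq> 0"
  shows "\<exists>v. df a z v \<noteq> 0"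
proof -
  obtain k where "z$k \<noteq> 0"
    using assms(2) unfolding brieskorn_def
    by (metis (mono_tags, lifting) assms(1) sum.neutral zero_power)
  then have "df a z (axis k 1) \<noteq> 0"
    using assms(1) by (simp add: df_eq_sum_brieskorn_grad brieskorn_grad_def axis_def
        if_distrib cong: if_cong)
  then show ?thesis by blast
qed

lemma dform_diag_field_nondegenerate:
  assumes "\<forall>k. c k > 0" and "u \<in> tangent a z"
    and "\<forall>v\<in>tangent a z. dform (diag_field c) z u v = 0"
  shows "u = 0"
proof -
  have "dform (diag_field c) z u (\<chi> j. \<i> * u$j) = (\<Sum>j\<in>UNIV. c j / 2 * (cmod (u$j))\<^sup>2)"
    unfolding dform_diag_field cmod_power2
    by (rule sum.cong) (simp_all add: power2_eq_square algebra_simps)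
  then have "(\<Sum>j\<in>UNIV. c j / 2 * (cmod (u$j))\<^sup>2) = 0"
    using assms(2,3) tangent_mult_ii by metis
  then have "\<forall>j. c j / 2 * (cmod (u$j))\<^sup>2 = 0"
    using assms(1) by (simp add: sum_nonneg_eq_0_iff less_imp_le)
  then show "u = 0"
    using assms(1) by (simp add: vec_eq_iff) (metis less_irrefl)
qed

lemma liouville_field_radial_identity:
  fixes c :: "'n::finite \<Rightarrow> real"
  assumes c_pos: "\<forall>k. c k > 0" and Y_tangent: "Y \<in> tangent a z"
    and liouville: "\<forall>v\<in>tangent a z. dform (diag_field c) z Y v = diag_field c z \<bullet> v"
  defines "u \<equiv> brieskorn_grad a z"
  defines "D \<equiv> \<Sum>k\<in>UNIV. (cmod (u k))\<^sup>2 / c k"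
    and "B \<equiv> \<Sum>k\<in>UNIV. u k * z$k / of_real (c k)"
    and "A \<equiv> \<Sum>k\<in>UNIV. u k * z$k"
  shows "2 * D * (z \<bullet> Y) = D * (norm z)\<^sup>2 - Re (cnj B * A)"
proof -
  have c_nz: "of_real (c k) \<noteq> (0::complex)" for k
    using c_pos by (metis less_irrefl of_real_eq_0_iff)
  txt \<open>w is D times the projection of z/c onto the tangent space, orthogonal for the
    c-weighted Hermitian product; pairing Y with \<i> w isolates the radial component of Y.\<close>
  define w where "w k = of_real D * z$k / of_real (c k) - B * cnj (u k) / of_real (c k)" for k
  have "(\<Sum>k\<in>UNIV. u k * w k)
        = of_real D * (\<Sum>k\<in>UNIV. u k * z$k / of_real (c k))
          - B * (\<Sum>k\<in>UNIV. of_real ((cmod (u k))\<^sup>2 / c k))"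
    unfolding w_def
    by (simp add: sum_subtractf sum_distrib_left algebra_simps flip: complex_norm_square)
  also have "\<dots> = 0"
    unfolding D_def B_def of_real_sum[symmetric] by simp
  finally have "(\<chi> k. w k) \<in> tangent a z"
    by (simp add: tangent_def df_eq_sum_brieskorn_grad u_def)
  then have "dform (diag_field c) z Y (\<chi> k. \<i> * w k) = diag_field c z \<bullet> (\<chi> k. \<i> * w k)"
    using liouville tangent_mult_ii by fastforce
  moreover have "dform (diag_field c) z Y (\<chi> k. \<i> * w k)
                 = (\<Sum>k\<in>UNIV. Re (of_real (c k) * (Y$k * cnj (w k)))) / 2"
    unfolding dform_diag_field sum_divide_distrib by (rule sum.cong) simp_all
  moreover have "diag_field c z \<bullet> (\<chi> k. \<i> * w k)
                 = (\<Sum>k\<in>UNIV. Re (of_real (c k) * (z$k * cnj (w k)))) / 4"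
    unfolding inner_diag_field sum_divide_distrib by (rule sum.cong) simp_all
  ultimately have "(\<Sum>k\<in>UNIV. Re (of_real (c k) * (Y$k * cnj (w k)))) * 2
             = (\<Sum>k\<in>UNIV. Re (of_real (c k) * (z$k * cnj (w k))))"
    by simp
  moreover have "of_real (c k) * (x * cnj (w k))
                 = of_real D * (x * cnj (z$k)) - cnj B * (u k * x)" for k x
    unfolding w_def using c_nz[of k] by (simp add: field_simps)
  ultimately have "Re (\<Sum>k\<in>UNIV. of_real D * (Y$k * cnj (z$k)) - cnj B * (u k * Y$k)) * 2
             = Re (\<Sum>k\<in>UNIV. of_real D * (z$k * cnj (z$k)) - cnj B * (u k * z$k))"
    by simp
  moreover have "(\<Sum>k\<in>UNIV. u k * Y$k) = 0"
    using Y_tangent by (simp add: tangent_def df_eq_sum_brieskorn_grad u_def)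
  ultimately have "2 * D * Re (\<Sum>k\<in>UNIV. Y$k * cnj (z$k))
                   = D * Re (\<Sum>k\<in>UNIV. z$k * cnj (z$k)) - Re (cnj B * A)"
    by (simp add: sum_subtractf A_def flip: sum_distrib_left)
  moreover have "z \<bullet> Y = Re (\<Sum>k\<in>UNIV. Y$k * cnj (z$k))"
    by (simp add: inner_commute[of z] inner_vec_complex mult.commute)
  moreover have "Re (\<Sum>k\<in>UNIV. z$k * cnj (z$k)) = (norm z)\<^sup>2"
    by (simp add: norm_vec_complex_power2 flip: complex_norm_square)
  ultimately show ?thesis by simp
qed

section \<open>Estimates on the unit sphere\<close>

lemma one_le_Max_range:
  fixes a :: "'n::finite \<Rightarrow> nat"
  assumes "\<forall>k. a k > 0"
  shows "1 \<le> Max (range a)"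
proof -
  have "0 < a undefined" using assms by blast
  also have "a undefined \<le> Max (range a)" by simp
  finally show ?thesis by simp
qed

text \<open>On the unit sphere, (1/N)^M bounds \<Sum> |\<partial>_kf|^2/a_k from below and N M bounds |\<Sum> z_k \<partial>_kf|
  from above, where N = CARD('n) and M = max a.\<close>
definition eps_bound :: "('n::finite \<Rightarrow> nat) \<Rightarrow> real" where
  "eps_bound a = (1 / real CARD('n)) ^ Max (range a) / (real CARD('n) * real (Max (range a)))"

lemma eps_bound_pos:
  fixes a :: "'n::finite \<Rightarrow> nat"
  assumes "\<forall>k. a k > 0"
  shows "eps_bound a > 0"
  using one_le_Max_range[OF assms] by (simp add: eps_bound_def)

lemma eps_bound_mult_lt:
  fixes a :: "'n::finite \<Rightarrow> nat"
  assumes "\<forall>k. a k > 0" and "eps < eps_bound a"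
  shows "eps * (real CARD('n) * real (Max (range a))) < (1 / real CARD('n)) ^ Max (range a)"
  using assms(2) one_le_Max_range[OF assms(1)] by (simp add: eps_bound_def pos_less_divide_eq)

lemma exists_coordinate_norm_ge:
  fixes z :: "complex^'n::finite"
  assumes "norm z = 1"
  obtains k where "(cmod (z$k))\<^sup>2 \<ge> 1 / real CARD('n)"
proof (rule ccontr)
  assume "\<not> thesis"
  then have "(cmod (z$k))\<^sup>2 < 1 / real CARD('n)" for k
    using that not_le by blast
  then have "(\<Sum>k\<in>UNIV. (cmod (z$k))\<^sup>2) < (\<Sum>k\<in>(UNIV::'n set). 1 / real CARD('n))"
    by (intro sum_strict_mono) auto
  then show False
    using assms by (simp add: norm_vec_complex_power2[symmetric])
qed

lemma weighted_grad_lower_bound: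
  fixes a :: "'n::finite \<Rightarrow> nat"
  assumes a_gt1: "\<forall>k. a k > 1" and z_unit: "norm z = 1"
  shows "(1 / real CARD('n)) ^ Max (range a)
         \<le> (\<Sum>k\<in>UNIV. (cmod (brieskorn_grad a z k))\<^sup>2 / real (a k))"
proof -
  obtain k where k: "(cmod (z$k))\<^sup>2 \<ge> 1 / real CARD('n)"
    using exists_coordinate_norm_ge[OF z_unit] .
  have "a k \<le> Max (range a)" by simp
  then have "a k - 1 \<le> Max (range a)" by linarith
  then have "(1 / real CARD('n)) ^ Max (range a) \<le> (1 / real CARD('n)) ^ (a k - 1)"
    by (auto intro!: power_decreasing simp: Suc_le_eq)
  also have "\<dots> \<le> ((cmod (z$k))\<^sup>2) ^ (a k - 1)"
    using k by (intro power_mono) auto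
  also have "\<dots> \<le> real (a k) * ((cmod (z$k))\<^sup>2) ^ (a k - 1)"
    using a_gt1[rule_format, of k] by (simp add: mult_le_cancel_right1)
  also have "\<dots> = (cmod (brieskorn_grad a z k))\<^sup>2 / real (a k)"
    using a_gt1[rule_format, of k]
    by (simp add: brieskorn_grad_def norm_mult norm_power power2_eq_square
        field_simps flip: power_mult)
  also have "\<dots> \<le> (\<Sum>k\<in>UNIV. (cmod (brieskorn_grad a z k))\<^sup>2 / real (a k))"
    by (rule member_le_sum) auto
  finally show ?thesis .
qed

lemma weighted_grad_le_grad:
  assumes "\<forall>k. a k > 0"
  shows "(\<Sum>k\<in>UNIV. (cmod (brieskorn_grad a z k))\<^sup>2 / real (a k))
         \<le> (\<Sum>k\<in>UNIV. (cmod (brieskorn_grad a z k))\<^sup>2)"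
  using assms by (intro sum_mono) (simp add: divide_le_eq mult_le_cancel_left1 Suc_le_eq)

lemma norm_euler_sum_le:
  fixes a :: "'n::finite \<Rightarrow> nat"
  assumes "\<forall>k. a k > 0" and "norm z \<le> 1"
  shows "cmod (\<Sum>k\<in>UNIV. brieskorn_grad a z k * z$k) \<le> real CARD('n) * real (Max (range a))"
proof -
  have "cmod (brieskorn_grad a z k * z$k) \<le> real (Max (range a))" for k
  proof -
    have "cmod (z$k) \<le> 1"
      using assms(2) Finite_Cartesian_Product.norm_nth_le[of z k] by simp
    then have "cmod (brieskorn_grad a z k * z$k) \<le> real (a k)"
      using assms(1) by (simp add: brieskorn_grad_mult norm_mult norm_power power_le_one)
    also have "\<dots> \<le> real (Max (range a))" by simp
    finally show ?thesis .
  qed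
  then have "(\<Sum>k\<in>UNIV. cmod (brieskorn_grad a z k * z$k)) \<le> (\<Sum>k\<in>(UNIV::'n set). real (Max (range a)))"
    by (rule sum_mono)
  then show ?thesis
    using norm_sum[of "\<lambda>k. brieskorn_grad a z k * z$k" UNIV] by simp
qed

lemma sum_cmod_mult_le_sqrt_mult_norm:
  fixes z :: "complex^'n::finite"
  shows "(\<Sum>k\<in>UNIV. cmod (u k) * cmod (z$k)) \<le> sqrt (\<Sum>k\<in>UNIV. (cmod (u k))\<^sup>2) * norm z"
proof (rule real_le_rsqrt[THEN order_trans])
  show "(\<Sum>k\<in>UNIV. cmod (u k) * cmod (z$k))\<^sup>2 \<le> (\<Sum>k\<in>UNIV. (cmod (u k))\<^sup>2) * (norm z)\<^sup>2"
    unfolding norm_vec_complex_power2 by (rule Cauchy_Schwarz_ineq_sum)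
qed (simp add: real_sqrt_mult)

lemma norm_euler_sum_sub_brieskorn_le:
  fixes a :: "'n::finite \<Rightarrow> nat"
  assumes a_pos: "\<forall>k. a k > 0"
  shows "cmod ((\<Sum>k\<in>UNIV. brieskorn_grad a z k * z$k) - brieskorn a z)
         \<le> (1 - 1 / real (Max (range a))) * sqrt (\<Sum>k\<in>UNIV. (cmod (brieskorn_grad a z k))\<^sup>2) * norm z"
proof -
  let ?u = "brieskorn_grad a z" and ?M = "real (Max (range a))"
  have a_le_M: "1 \<le> real (a k)" "real (a k) \<le> ?M" for k
    using a_pos[rule_format, of k] by auto
  have "?u k * z$k * of_real (1 - 1 / real (a k)) = ?u k * z$k - z$k ^ a k" for k
  proof -
    have "of_nat (a k) \<noteq> (0::complex)" using a_pos by simp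
    then show ?thesis
      using brieskorn_grad_mult[of a k z] a_pos by (simp add: field_simps)
  qed
  then have "cmod ((\<Sum>k\<in>UNIV. ?u k * z$k) - brieskorn a z)
             = cmod (\<Sum>k\<in>UNIV. ?u k * z$k * of_real (1 - 1 / real (a k)))"
    by (simp add: brieskorn_def sum_subtractf)
  also have "\<dots> \<le> (\<Sum>k\<in>UNIV. cmod (?u k * z$k * of_real (1 - 1 / real (a k))))"
    by (rule norm_sum)
  also have "\<dots> \<le> (\<Sum>k\<in>UNIV. (1 - 1 / ?M) * (cmod (?u k) * cmod (z$k)))"
  proof (rule sum_mono)
    fix k
    have "\<bar>1 - 1 / real (a k)\<bar> \<le> 1 - 1 / ?M"
      using a_le_M[of k] by (simp add: frac_le)
    then have "\<bar>1 - 1 / real (a k)\<bar> * (cmod (?u k) * cmod (z$k))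
               \<le> (1 - 1 / ?M) * (cmod (?u k) * cmod (z$k))"
      by (rule mult_right_mono) simp
    then show "cmod (?u k * z$k * of_real (1 - 1 / real (a k)))
               \<le> (1 - 1 / ?M) * (cmod (?u k) * cmod (z$k))"
      by (simp only: norm_mult norm_of_real ac_simps)
  qed
  also have "\<dots> = (1 - 1 / ?M) * (\<Sum>k\<in>UNIV. cmod (?u k) * cmod (z$k))"
    by (simp add: sum_distrib_left)
  also have "\<dots> \<le> (1 - 1 / ?M) * (sqrt (\<Sum>k\<in>UNIV. (cmod (?u k))\<^sup>2) * norm z)"
    using one_le_Max_range[OF a_pos]
    by (intro mult_left_mono sum_cmod_mult_le_sqrt_mult_norm) simp
  finally show ?thesis by (simp only: mult.assoc)
qed

lemma norm_euler_sum_lt_norm_grad: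
  fixes a :: "'n::finite \<Rightarrow> nat"
  assumes a_gt1: "\<forall>k. a k > 1" and z_fibre: "brieskorn a z = of_real eps"
    and z_unit: "norm z = 1" and eps: "0 < eps" "eps < eps_bound a"
  shows "(cmod (\<Sum>k\<in>UNIV. brieskorn_grad a z k * z$k))\<^sup>2
         < (\<Sum>k\<in>UNIV. (cmod (brieskorn_grad a z k))\<^sup>2)"
proof -
  let ?A = "\<Sum>k\<in>UNIV. brieskorn_grad a z k * z$k"
    and ?S = "\<Sum>k\<in>UNIV. (cmod (brieskorn_grad a z k))\<^sup>2"
    and ?N = "real CARD('n)" and ?M = "real (Max (range a))"
    and ?L = "(1 / real CARD('n)) ^ Max (range a)"
  have a_pos: "\<forall>k. a k > 0" using a_gt1 by (meson less_trans zero_less_one)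
  have M_ge1: "?M \<ge> 1"
    using one_le_Max_range[OF a_pos] by simp
  have L_le_S: "?L \<le> ?S"
    using weighted_grad_lower_bound[OF a_gt1 z_unit] weighted_grad_le_grad[OF a_pos, of z] by linarith
  have L_pos: "0 < ?L" "?L \<le> 1" by (simp_all add: power_le_one)
  have L_le_sqrt: "?L \<le> sqrt ?S"
  proof (cases "?S \<le> 1")
    case True
    have "0 \<le> ?S" using L_le_S L_pos by linarith
    from mult_left_mono[OF True this] have "?S \<le> sqrt ?S"
      by (intro real_le_rsqrt) (simp add: power2_eq_square)
    then show ?thesis using L_le_S by linarith
  next
    case False
    then have "1 \<le> sqrt ?S" by simp
    then show ?thesis using L_pos by linarith
  qed
  have "eps * ?M \<le> eps * (?N * ?M)"
    using eps(1) M_ge1 by (simp add: card_ge_0_finite)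
  then have "eps * ?M < sqrt ?S"
    using eps_bound_mult_lt[OF a_pos eps(2)] L_le_sqrt by linarith
  then have eps_lt: "eps < sqrt ?S / ?M"
    using M_ge1 by (simp add: pos_less_divide_eq)
  have "cmod ?A \<le> cmod (of_real eps :: complex) + cmod (?A - of_real eps)"
    by (rule norm_triangle_sub)
  also have "\<dots> \<le> eps + (1 - 1 / ?M) * sqrt ?S"
    using norm_euler_sum_sub_brieskorn_le[OF a_pos, of z] z_fibre z_unit eps(1) by simp
  also have "\<dots> < sqrt ?S / ?M + (1 - 1 / ?M) * sqrt ?S"
    using eps_lt by simp
  also have "\<dots> = sqrt ?S"
    using M_ge1 by (simp add: field_simps)
  finally have "(cmod ?A)\<^sup>2 < (sqrt ?S)\<^sup>2"
    by (intro power_strict_mono) auto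
  then show ?thesis by (simp add: sum_nonneg)
qed

lemma euler_sum_lt_weighted_grad:
  fixes a :: "'n::finite \<Rightarrow> nat"
  assumes a_gt1: "\<forall>k. a k > 1" and z_unit: "norm z = 1" and eps: "0 < eps" "eps < eps_bound a"
  shows "eps * Re (\<Sum>k\<in>UNIV. brieskorn_grad a z k * z$k)
         < (\<Sum>k\<in>UNIV. (cmod (brieskorn_grad a z k))\<^sup>2 / real (a k))"
proof -
  have a_pos: "\<forall>k. a k > 0" using a_gt1 by (meson less_trans zero_less_one)
  have "eps * Re (\<Sum>k\<in>UNIV. brieskorn_grad a z k * z$k)
        \<le> eps * cmod (\<Sum>k\<in>UNIV. brieskorn_grad a z k * z$k)"
    by (intro mult_left_mono complex_Re_le_cmod) (use eps in simp)
  also have "\<dots> \<le> eps * (real CARD('n) * real (Max (range a)))"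
    using eps(1) norm_euler_sum_le[OF a_pos] z_unit by (intro mult_left_mono) auto
  also have "\<dots> < (1 / real CARD('n)) ^ Max (range a)"
    by (rule eps_bound_mult_lt[OF a_pos eps(2)])
  also have "\<dots> \<le> (\<Sum>k\<in>UNIV. (cmod (brieskorn_grad a z k))\<^sup>2 / real (a k))"
    by (rule weighted_grad_lower_bound[OF a_gt1 z_unit])
  finally show ?thesis .
qed

section \<open>Diagonal forms give Liouville domains\<close>

lemma radial_term_decomposition:
  fixes c :: "'n::finite \<Rightarrow> real"
  assumes a_pos: "\<forall>k. a k > 0" and z_fibre: "brieskorn a z = of_real eps"
    and c_inverse: "\<forall>k. 1 / c k = th0 + th1 / real (a k)"
  defines "u \<equiv> brieskorn_grad a z"
  defines "D \<equiv> \<Sum>k\<in>UNIV. (cmod (u k))\<^sup>2 / c k"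
    and "B \<equiv> \<Sum>k\<in>UNIV. u k * z$k / of_real (c k)"
    and "A \<equiv> \<Sum>k\<in>UNIV. u k * z$k"
  shows "D - Re (cnj B * A)
         = th0 * ((\<Sum>k\<in>UNIV. (cmod (u k))\<^sup>2) - (cmod A)\<^sup>2)
           + th1 * ((\<Sum>k\<in>UNIV. (cmod (u k))\<^sup>2 / real (a k)) - eps * Re A)"
proof -
  have "D = th0 * (\<Sum>k\<in>UNIV. (cmod (u k))\<^sup>2) + th1 * (\<Sum>k\<in>UNIV. (cmod (u k))\<^sup>2 / real (a k))"
  proof -
    have "(cmod (u k))\<^sup>2 / c k = th0 * (cmod (u k))\<^sup>2 + th1 * ((cmod (u k))\<^sup>2 / real (a k))" for k
      using c_inverse[rule_format, of k] by (simp add: divide_inverse algebra_simps flip: inverse_eq_divide)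
    then show ?thesis by (simp add: D_def sum.distrib sum_distrib_left)
  qed
  moreover have "B = of_real th0 * A + of_real th1 * of_real eps"
  proof -
    have "u k * z$k / of_real (c k) = of_real th0 * (u k * z$k) + of_real th1 * z$k ^ a k" for k
    proof -
      have "u k * z$k / of_real (c k) = u k * z$k * of_real (1 / c k)"
        by (simp add: divide_inverse)
      also have "\<dots> = of_real th0 * (u k * z$k) + of_real th1 * (u k * z$k / of_nat (a k))"
        using c_inverse by (simp add: algebra_simps)
      finally show ?thesis
        using a_pos[rule_format, of k] by (simp add: u_def brieskorn_grad_mult)
    qed
    then show ?thesis
      using z_fibre by (simp add: B_def A_def brieskorn_def sum.distrib flip: sum_distrib_left)
  qed
  ultimately show ?thesis
    unfolding cmod_power2[of A] by (simp add: algebra_simps power2_eq_square)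
qed

lemma liouville_domain_diag_field:
  fixes a :: "'n::finite \<Rightarrow> nat" and c :: "'n \<Rightarrow> real"
  assumes a_gt1: "\<forall>k. a k > 1" and c_pos: "\<forall>k. c k > 0"
    and eps: "0 < eps" "eps < eps_bound a"
    and th: "th0 \<ge> 0" "th1 \<ge> 0" "th0 + th1 > 0"
    and c_inverse: "\<forall>k. 1 / c k = th0 + th1 / real (a k)"
  shows "liouville_domain a eps (diag_field c)"
  unfolding liouville_domain_def
proof (intro conjI ballI impI)
  have a_pos: "\<forall>k. a k > 0" using a_gt1 by (meson less_trans zero_less_one)
  fix z assume "z \<in> Xeps a eps"
  then have z_fibre: "brieskorn a z = of_real eps" by (simp add: Xeps_def)
  then show "\<exists>v. df a z v \<noteq> 0"
    using df_nonzero_if_brieskorn_nonzero[OF a_pos] eps(1) by simp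
  show "u = 0" if "u \<in> tangent a z" "\<forall>v\<in>tangent a z. dform (diag_field c) z u v = 0" for u
    using dform_diag_field_nondegenerate[OF c_pos that] .
  fix Y assume z_unit: "norm z = 1" and Y_tangent: "Y \<in> tangent a z"
    and liouville: "\<forall>v\<in>tangent a z. dform (diag_field c) z Y v = diag_field c z \<bullet> v"
  define u where "u = brieskorn_grad a z"
  define D where "D = (\<Sum>k\<in>UNIV. (cmod (u k))\<^sup>2 / c k)"
  define B where "B = (\<Sum>k\<in>UNIV. u k * z$k / of_real (c k))"
  define A where "A = (\<Sum>k\<in>UNIV. u k * z$k)"
  have "2 * D * (z \<bullet> Y) = D - Re (cnj B * A)"
    using liouville_field_radial_identity[OF c_pos Y_tangent liouville] z_unit
    by (simp add: D_def B_def A_def u_def)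
  also have "\<dots> = th0 * ((\<Sum>k\<in>UNIV. (cmod (u k))\<^sup>2) - (cmod A)\<^sup>2)
                  + th1 * ((\<Sum>k\<in>UNIV. (cmod (u k))\<^sup>2 / real (a k)) - eps * Re A)"
    unfolding D_def B_def A_def u_def by (rule radial_term_decomposition[OF a_pos z_fibre c_inverse])
  also have "\<dots> > 0"
  proof -
    have "(cmod A)\<^sup>2 < (\<Sum>k\<in>UNIV. (cmod (u k))\<^sup>2)"
      unfolding A_def u_def by (rule norm_euler_sum_lt_norm_grad[OF a_gt1 z_fibre z_unit eps])
    moreover have "eps * Re A < (\<Sum>k\<in>UNIV. (cmod (u k))\<^sup>2 / real (a k))"
      unfolding A_def u_def by (rule euler_sum_lt_weighted_grad[OF a_gt1 z_unit eps])
    ultimately show ?thesis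
      using th by (smt (verit) mult_pos_pos mult_nonneg_nonneg)
  qed
  finally have "0 < 2 * D * (z \<bullet> Y)" .
  moreover have "0 \<le> D"
    unfolding D_def using c_pos by (intro sum_nonneg) (simp add: less_imp_le)
  ultimately show "z \<bullet> Y > 0"
    by (simp add: zero_less_mult_iff)
qed

section \<open>The homotopy\<close>

lemma has_derivative_phi:
  fixes a :: "'n::finite \<Rightarrow> nat"
  shows "(phi a t has_derivative
          (\<lambda>h. (1/8) * (\<Sum>j\<in>UNIV. (1 + t * (real (a j) - 1)) * (z$j \<bullet> h$j + h$j \<bullet> z$j)))) (at z)"
proof -
  have "phi a t = (\<lambda>z. (1/8) * (\<Sum>j\<in>UNIV. (1 + t * (real (a j) - 1)) * (z$j \<bullet> z$j)))"
    by (rule ext) (simp only: phi_def power2_norm_eq_inner)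
  then show ?thesis
    by (simp only:) (intro has_derivative_mult_right has_derivative_sum has_derivative_inner
        has_derivative_vec_nth)
qed

lemma minus_dC_phi:
  "- dC (phi a t) z v = diag_field (\<lambda>j. 1 + t * (real (a j) - 1)) z \<bullet> v"
proof -
  have "- dC (phi a t) z v
        = (\<Sum>j\<in>UNIV. - ((1/8) * ((1 + t * (real (a j) - 1)) * (z$j \<bullet> (\<i> * v$j) + (\<i> * v$j) \<bullet> z$j))))"
    by (simp add: dC_def frechet_derivative_at[OF has_derivative_phi, symmetric]
        sum_distrib_left sum_negf)
  also have "\<dots> = diag_field (\<lambda>j. 1 + t * (real (a j) - 1)) z \<bullet> v"
    unfolding inner_diag_field
    by (rule sum.cong) (simp_all add: inner_complex_eq_Re_mult_cnj field_simps)
  finally show ?thesis .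
qed

lemma lambda_a_eq_inner_diag_field: "lambda_a a z v = diag_field (\<lambda>j. real (a j)) z \<bullet> v"
  unfolding lambda_a_def inner_diag_field sum_distrib_left Re_sum
  by (rule sum.cong) (simp_all add: field_simps)

lemma inner_diag_field_act:
  "diag_field c (act a m z) \<bullet> act a m v = diag_field c z \<bullet> v"
proof -
  define q where "q j = cis (2 * pi / real (lcmL a)) ^ (m * (lcmL a div a j))" for j
  have q_unit: "q j * cnj (q j) = 1" for j
    unfolding complex_norm_square[symmetric] q_def by (simp add: norm_power)
  have "\<i> * (q j * z$j) * cnj (q j * v$j) = \<i> * z$j * cnj (v$j) * (q j * cnj (q j))" for j
    by (simp add: mult_ac)
  then have "Re (\<i> * (q j * z$j) * cnj (q j * v$j)) = Re (\<i> * z$j * cnj (v$j))" for j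
    by (simp only: q_unit mult_1_right)
  then show ?thesis
    by (simp add: inner_diag_field act_def q_def[symmetric])
qed

text \<open>c_k(s) = a_k r(s) \<Prod>_(j \<noteq> k) (a_j + s (1 - a_j)) with r affine, r(0) = 1 / \<Prod>_j a_j and
  r(1) = 1. Thus c(0) = 1, c(1) = a, and 1/c_k(s) = ((1 - s) + s/a_k) / rho(s) with rho(s) > 0
  independent of k.\<close>
definition homotopy_coeff :: "('n::finite \<Rightarrow> nat) \<Rightarrow> 'n \<Rightarrow> real poly" where
  "homotopy_coeff a k =
     smult (real (a k)) ([:1 / (\<Prod>j\<in>UNIV. real (a j)), 1 - 1 / (\<Prod>j\<in>UNIV. real (a j)):]
       * (\<Prod>j\<in>UNIV - {k}. [:real (a j), 1 - real (a j):]))"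

definition homotopy_field :: "('n::finite \<Rightarrow> nat) \<Rightarrow> real \<Rightarrow> complex^'n \<Rightarrow> complex^'n" where
  "homotopy_field a s = diag_field (\<lambda>j. poly (homotopy_coeff a j) s)"

lemma poly_homotopy_coeff:
  "poly (homotopy_coeff a k) s = real (a k) * (1 / (\<Prod>j\<in>UNIV. real (a j)) + s * (1 - 1 / (\<Prod>j\<in>UNIV. real (a j))))
     * (\<Prod>j\<in>UNIV - {k}. real (a j) + s * (1 - real (a j)))"
  by (simp add: homotopy_coeff_def poly_prod ring_distribs)

lemma homotopy_coeff_at_0:
  assumes "\<forall>k. a k > 0"
  shows "poly (homotopy_coeff a k) 0 = 1"
proof -
  have "(\<Prod>j\<in>UNIV. real (a j)) = real (a k) * (\<Prod>j\<in>UNIV - {k}. real (a j))"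
    by (rule prod.remove) auto
  moreover have "(\<Prod>j\<in>UNIV. real (a j)) \<noteq> 0"
    using assms by simp
  ultimately show ?thesis by (simp add: poly_homotopy_coeff)
qed

lemma homotopy_coeff_at_1: "poly (homotopy_coeff a k) 1 = real (a k)"
  by (simp add: poly_homotopy_coeff)

lemma homotopy_coeff_inverse:
  fixes a :: "'n::finite \<Rightarrow> nat"
  assumes a_pos: "\<forall>k. a k > 0" and s: "0 \<le> s" "s \<le> 1"
  obtains rho where "rho > 0"
    and "\<forall>k. 1 / poly (homotopy_coeff a k) s = (1 - s) / rho + (s / rho) / real (a k)"
proof
  let ?P = "\<Prod>j\<in>UNIV. real (a j)" and ?f = "\<lambda>j. real (a j) + s * (1 - real (a j))"
  have a_ge1: "real (a j) \<ge> 1" for j using a_pos[rule_format, of j] by simp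
  have f_pos: "?f j > 0" for j
  proof -
    have "?f j = (1 - s) * real (a j) + s" by (simp add: algebra_simps)
    also have "\<dots> \<ge> (1 - s) * 1 + s" using a_ge1[of j] s by (intro add_right_mono mult_left_mono) auto
    finally show ?thesis by simp
  qed
  have r_pos: "1 / ?P + s * (1 - 1 / ?P) > 0"
  proof -
    have "?P \<ge> 1" using a_ge1 by (intro prod_ge_1) auto
    then have "0 < 1 / ?P" "s * (1 - 1 / ?P) \<ge> 0" using s by simp_all
    then show ?thesis by linarith
  qed
  define rho where "rho = (1 / ?P + s * (1 - 1 / ?P)) * (\<Prod>j\<in>UNIV. ?f j)"
  show rho_pos: "rho > 0"
    unfolding rho_def using r_pos f_pos by (intro mult_pos_pos prod_pos) auto
  show "\<forall>k. 1 / poly (homotopy_coeff a k) s = (1 - s) / rho + (s / rho) / real (a k)"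
  proof
    fix k
    have "(\<Prod>j\<in>UNIV. ?f j) = ?f k * (\<Prod>j\<in>UNIV - {k}. ?f j)"
      by (rule prod.remove) auto
    then have c_mult_f: "poly (homotopy_coeff a k) s * ?f k = real (a k) * rho"
      unfolding poly_homotopy_coeff rho_def by (simp only: mult_ac)
    have "1 / poly (homotopy_coeff a k) s = ?f k / (poly (homotopy_coeff a k) s * ?f k)"
      using f_pos[of k] by simp
    also have "\<dots> = ?f k / (real (a k) * rho)"
      by (simp only: c_mult_f)
    also have "\<dots> = (1 - s) / rho + (s / rho) / real (a k)"
      using a_ge1[of k] rho_pos by (simp add: field_simps)
    finally show "1 / poly (homotopy_coeff a k) s = (1 - s) / rho + (s / rho) / real (a k)" .
  qed
qed

lemma liouville_domain_homotopy_field: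
  fixes a :: "'n::finite \<Rightarrow> nat"
  assumes a_gt1: "\<forall>k. a k > 1" and s: "0 \<le> s" "s \<le> 1"
    and eps: "0 < eps" "eps < eps_bound a"
  shows "liouville_domain a eps (homotopy_field a s)"
proof -
  have a_pos: "\<forall>k. a k > 0" using a_gt1 by (meson less_trans zero_less_one)
  obtain rho where rho: "rho > 0"
    and c_inverse: "\<forall>k. 1 / poly (homotopy_coeff a k) s = (1 - s) / rho + (s / rho) / real (a k)"
    using homotopy_coeff_inverse[OF a_pos s] .
  have "1 / poly (homotopy_coeff a k) s > 0" for k
    unfolding c_inverse[rule_format] using rho s a_pos[rule_format, of k]
    by (smt (verit) divide_nonneg_pos divide_pos_pos of_nat_0_less_iff)
  then have "\<forall>k. poly (homotopy_coeff a k) s > 0"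
    by simp
  moreover have "0 < (1 - s) / rho + s / rho"
    using rho by (simp add: add_divide_distrib[symmetric])
  ultimately show ?thesis
    unfolding homotopy_field_def
    using liouville_domain_diag_field[OF a_gt1 _ eps _ _ _ c_inverse] rho s by simp
qed

lemma Cinf_on_homotopy_field: "Cinf_on UNIV (\<lambda>p. homotopy_field a (fst p) (snd p))"
proof -
  have "(\<lambda>p. homotopy_field a (fst p) (snd p))
        = poly_affine_field (\<lambda>j. \<i>/4) (\<lambda>j. 0) (homotopy_coeff a) (\<lambda>j. 0)"
    by (simp add: fun_eq_iff homotopy_field_def diag_field_def poly_affine_field_def)
  then show ?thesis by (simp add: Cinf_on_poly_affine_field)
qed

theorem proposition6p5:
  fixes a :: "'n::finite \<Rightarrow> nat"
  assumes "\<forall>k. a k > 1"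
  shows "\<exists>e0>0. \<forall>eps. 0 < eps \<and> eps < e0 \<longrightarrow>
           equivariant_liouville_homotopy a eps
             (\<lambda>z v. - dC (phi a 0) z v) (lambda_a a)"
proof (intro exI[of _ "eps_bound a"] conjI allI impI)
  have a_pos: "\<forall>k. a k > 0" using assms by (meson less_trans zero_less_one)
  show "eps_bound a > 0" by (rule eps_bound_pos[OF a_pos])
  fix eps assume eps: "0 < eps \<and> eps < eps_bound a"
  show "equivariant_liouville_homotopy a eps (\<lambda>z v. - dC (phi a 0) z v) (lambda_a a)"
    unfolding equivariant_liouville_homotopy_def
  proof (intro exI[of _ "homotopy_field a"] exI[of _ UNIV] conjI ballI allI)
    show "Cinf_on UNIV (\<lambda>p. homotopy_field a (fst p) (snd p))"
      by (rule Cinf_on_homotopy_field)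
    show "liouville_domain a eps (homotopy_field a s)" if "s \<in> {0..1}" for s
      using liouville_domain_homotopy_field[OF assms] that eps by simp
    show "homotopy_field a s (act a m z) \<bullet> act a m v = homotopy_field a s z \<bullet> v" for s m z v
      unfolding homotopy_field_def by (rule inner_diag_field_act)
    show "homotopy_field a 0 z \<bullet> v = - dC (phi a 0) z v" for z v
      by (simp add: minus_dC_phi homotopy_field_def homotopy_coeff_at_0[OF a_pos])
    show "homotopy_field a 1 z \<bullet> v = lambda_a a z v" for z v
      by (simp add: lambda_a_eq_inner_diag_field homotopy_field_def homotopy_coeff_at_1)
  qed simp
qed

end
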